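(* Let $\Phi=(A;A^*;\{E_i\}_{i=0}^d;\{E^*_i\}_{i=0}^d)$ be a Leonard system in $\mathcal A$ with eigenvalue sequence $\theta_0,\dots,\theta_d$, and let $p_i$, $x_i$, $m_i$ be as defined below. Then $$\sum_{r=0}^d p_i(\theta_r)p_j(\theta_r)m_r=\delta_{ij}\,x_1x_2\cdots x_i\qquad(0\le i,j\le d),$$ $$\sum_{i=0}^d\frac{p_i(\theta_r)p_i(\theta_s)}{x_1x_2\cdots x_i}=\delta_{rs}\,m_r^{-1}\qquad(0\le r,s\le d).$$
   Context: Let $\mathbb K$ be a field, $d\ge 0$ an integer, and $\mathcal A$ a $\mathbb K$-algebra isomorphic to the full matrix algebra $\mathrm{Mat}_{d+1}(\mathbb K)$; $I$ is its identity. An element of $\mathcal A$ is multiplicity-free if it has $d+1$ mutually distinct eigenvalues in $\mathbb K$. If $A$ is multiplicity-free with eigenvalues $\theta_0,\dots,\theta_d$, the primitive idempotent of $A$ associated with $\theta_i$ is $E_i=\prod_{j\ne i}(A-\theta_jI)/(\theta_i-\theta_j)$. A Leonard system in $\mathcal A$ is a sequence $\Phi=(A;A^*;\{E_i\}_{i=0}^d;\{E^*_i\}_{i=0}^d)$ such that (i) $A,A^*\in\mathcal A$ are multiplicity-free; (ii) $E_0,\dots,E_d$ is an ordering of the primitive idempotents of $A$; (iii) $E^*_0,\dots,E^*_d$ is an ordering of the primitive idempotents of $A^*$; (iv) $E_iA^*E_j=0$ if $|i-j|>1$ and $E_iA^*E_j\ne0$ if $|i-j|=1$ ($0\le i,j\le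 d$); (v) $E^*_iAE^*_j=0$ if $|i-j|>1$ and $E^*_iAE^*_j\ne0$ if $|i-j|=1$ ($0\le i,j\le d$). Here $A^*$ is merely notation (not an adjoint). $\theta_i$ is the eigenvalue of $A$ associated with $E_i$. Define $a_i=\mathrm{tr}(E^*_iA)$ ($0\le i\le d$), $x_i=\mathrm{tr}(E^*_iAE^*_{i-1}A)$ ($1\le i\le d$), $x_0=0$; polynomials $p_{-1}=0$, $p_0=1$, $\lambda p_i=p_{i+1}+a_ip_i+x_ip_{i-1}$ ($0\le i\le d$); and $m_i=\mathrm{tr}(E_iE^*_0)$ ($0\le i\le d$). Empty products equal $1$. *)

theory Defs
  imports "Jordan_Normal_Form.Matrix" "Jordan_Normal_Form.Char_Poly"
    "HOL-Computational_Algebra.Polynomial"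
begin

text \<open>The algebra is taken concretely as the full matrix algebra of
(d+1) x (d+1) matrices over a field.\<close>

definition mtrace :: "'a::comm_ring_1 mat \<Rightarrow> 'a" where
  "mtrace M = (\<Sum>i<dim_row M. M $$ (i, i))"

definition multiplicity_free :: "nat \<Rightarrow> 'a::field mat \<Rightarrow> bool" where
  "multiplicity_free d A \<longleftrightarrow> A \<in> carrier_mat (d+1) (d+1) \<and>
     (\<exists>th. inj_on th {0..d} \<and> (\<forall>i\<le>d. eigenvalue A (th i)))"

definition prim_idem :: "nat \<Rightarrow> 'a::field mat \<Rightarrow> (nat \<Rightarrow> 'a) \<Rightarrow> nat \<Rightarrow> 'a mat" where
  "prim_idem d A th i =
     foldr (\<lambda>j M. ((1 / (th i - th j)) \<cdot>\<^sub>m (A - th j \<cdot>\<^sub>m 1\<^sub>m (d+1))) * M)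
       (filter (\<lambda>j. j \<noteq> i) [0..<d+1]) (1\<^sub>m (d+1))"

definition idem_ordering :: "nat \<Rightarrow> 'a::field mat \<Rightarrow> (nat \<Rightarrow> 'a mat) \<Rightarrow> bool" where
  "idem_ordering d A E \<longleftrightarrow>
     (\<exists>th. inj_on th {0..d} \<and> (\<forall>i\<le>d. eigenvalue A (th i)) \<and>
           (\<forall>i\<le>d. E i = prim_idem d A th i))"

definition leonard_system ::
  "nat \<Rightarrow> 'a::field mat \<Rightarrow> 'a mat \<Rightarrow> (nat \<Rightarrow> 'a mat) \<Rightarrow> (nat \<Rightarrow> 'a mat) \<Rightarrow> bool" where
  "leonard_system d A As E Es \<longleftrightarrow>
     multiplicity_free d A \<and> multiplicity_free d As \<and>
     idem_ordering d A E \<and> idem_ordering d As Es \<and>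
     (\<forall>i\<le>d. \<forall>j\<le>d.
        (i > j + 1 \<or> j > i + 1 \<longrightarrow> E i * As * E j = 0\<^sub>m (d+1) (d+1)) \<and>
        (i = j + 1 \<or> j = i + 1 \<longrightarrow> E i * As * E j \<noteq> 0\<^sub>m (d+1) (d+1))) \<and>
     (\<forall>i\<le>d. \<forall>j\<le>d.
        (i > j + 1 \<or> j > i + 1 \<longrightarrow> Es i * A * Es j = 0\<^sub>m (d+1) (d+1)) \<and>
        (i = j + 1 \<or> j = i + 1 \<longrightarrow> Es i * A * Es j \<noteq> 0\<^sub>m (d+1) (d+1)))"

definition ls_a :: "'a::field mat \<Rightarrow> (nat \<Rightarrow> 'a mat) \<Rightarrow> nat \<Rightarrow> 'a" where
  "ls_a A Es i = mtrace (Es i * A)"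

definition ls_x :: "'a::field mat \<Rightarrow> (nat \<Rightarrow> 'a mat) \<Rightarrow> nat \<Rightarrow> 'a" where
  "ls_x A Es i = (if i = 0 then 0 else mtrace (Es i * A * Es (i - 1) * A))"

definition ls_m :: "(nat \<Rightarrow> 'a::field mat) \<Rightarrow> (nat \<Rightarrow> 'a mat) \<Rightarrow> nat \<Rightarrow> 'a" where
  "ls_m E Es i = mtrace (E i * Es 0)"

text \<open>p_{-1} = 0, p_0 = 1, lambda p_i = p_{i+1} + a_i p_i + x_i p_{i-1}.\<close>
fun ls_p :: "(nat \<Rightarrow> 'a::field) \<Rightarrow> (nat \<Rightarrow> 'a) \<Rightarrow> nat \<Rightarrow> 'a poly" where
  "ls_p a x 0 = 1"
| "ls_p a x (Suc 0) = [:- a 0, 1:]"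
| "ls_p a x (Suc (Suc i)) =
     [:- a (Suc i), 1:] * ls_p a x (Suc i) - Polynomial.smult (x (Suc i)) (ls_p a x i)"

end

theory Submission
  imports Defs
begin

(* Let W diagonalise A*, so that W^-1 E*_i W is the i-th diagonal matrix unit, and put
   Y = W^-1 A W. The Leonard system axioms make Y irreducible tridiagonal, with diagonal a_i
   and products x_i of opposite off-diagonal entries. If V diagonalises A, the columns of
   U = W^-1 V are eigenvectors of Y and the rows of U^-1 are left eigenvectors, so the
   three-term recurrence expresses their i-th entries through p_i(theta_r) and their 0-th
   entries. As m_r = (U^-1)_r0 U_0r, the two orthogonality relations are U U^-1 = I and
   U^-1 U = I read entrywise. *)

definition diag_unit :: "nat \<Rightarrow> nat \<Rightarrow> 'a::zero_neq_one mat" where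
  "diag_unit n k = mat_diag n (\<lambda>i. of_bool (i = k))"

lemma diag_unit_carrier [simp]: "diag_unit n k \<in> carrier_mat n n"
  by (simp add: diag_unit_def)

lemma diag_unit_dim [simp]: "dim_row (diag_unit n k) = n" "dim_col (diag_unit n k) = n"
  by (simp_all add: diag_unit_def mat_diag_def)

lemma mult_diag_unit_mult_index:
  fixes M N :: "'a::comm_ring_1 mat"
  assumes "M \<in> carrier_mat m n" "N \<in> carrier_mat n p" "i < m" "j < n" "k < p"
  shows "(M * diag_unit n j * N) $$ (i, k) = M $$ (i, j) * N $$ (j, k)"
  using assms
  by (simp add: diag_unit_def mat_diag_mult_right scalar_prod_def
      mult.commute[of _ "of_bool _"] mult.assoc)

lemma mtrace_diag_unit_mult:
  fixes M :: "'a::comm_ring_1 mat"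
  assumes "M \<in> carrier_mat n n" "i < n"
  shows "mtrace (diag_unit n i * M) = M $$ (i, i)"
  using assms by (simp add: mtrace_def diag_unit_def mat_diag_mult_left)

lemma diag_unit_mult_diag_unit_index:
  fixes M :: "'a::comm_ring_1 mat"
  assumes "M \<in> carrier_mat n n" "k < n" "l < n"
  shows "(diag_unit n i * M * diag_unit n j) $$ (k, l) = of_bool (k = i \<and> l = j) * M $$ (k, l)"
  using assms by (simp add: diag_unit_def mat_diag_mult_left mat_diag_mult_right[of _ n n])

lemma diag_unit_mult_diag_unit_eq_zero_iff:
  fixes M :: "'a::comm_ring_1 mat"
  assumes "M \<in> carrier_mat n n" "i < n" "j < n"
  shows "diag_unit n i * M * diag_unit n j = 0\<^sub>m n n \<longleftrightarrow> M $$ (i, j) = 0"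
proof
  assume "diag_unit n i * M * diag_unit n j = 0\<^sub>m n n"
  then have "(diag_unit n i * M * diag_unit n j) $$ (i, j) = 0" using assms by simp
  then show "M $$ (i, j) = 0" using diag_unit_mult_diag_unit_index[OF assms] by simp
next
  assume zero: "M $$ (i, j) = 0"
  show "diag_unit n i * M * diag_unit n j = 0\<^sub>m n n"
  proof (rule eq_matI)
    fix k l assume "k < dim_row (0\<^sub>m n n :: 'a mat)" "l < dim_col (0\<^sub>m n n :: 'a mat)"
    then show "(diag_unit n i * M * diag_unit n j) $$ (k, l) = 0\<^sub>m n n $$ (k, l)"
      using diag_unit_mult_diag_unit_index[OF assms(1), of k l i j] zero by auto
  qed auto
qed

lemma mtrace_mult_comm:
  fixes A B :: "'a::comm_ring_1 mat"
  assumes "A \<in> carrier_mat n m" "B \<in> carrier_mat m n"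
  shows "mtrace (A * B) = mtrace (B * A)"
proof -
  have "mtrace (A * B) = (\<Sum>i<n. \<Sum>l<m. A $$ (i, l) * B $$ (l, i))"
    using assms by (simp add: mtrace_def scalar_prod_def atLeast0LessThan)
  also have "\<dots> = (\<Sum>l<m. \<Sum>i<n. B $$ (l, i) * A $$ (i, l))"
    by (subst sum.swap) (simp add: mult.commute)
  also have "\<dots> = mtrace (B * A)"
    using assms by (simp add: mtrace_def scalar_prod_def atLeast0LessThan)
  finally show ?thesis .
qed

lemma mtrace_diag_unit_products:
  fixes P Q R S :: "'a::comm_ring_1 mat"
  assumes "P \<in> carrier_mat n n" "Q \<in> carrier_mat n n" "R \<in> carrier_mat n n" "S \<in> carrier_mat n n"
    and "r < n" "s < n"
  shows "mtrace (P * diag_unit n r * Q * (R * diag_unit n s * S))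
    = (Q * R) $$ (r, s) * (S * P) $$ (s, r)"
proof -
  have "mtrace (P * diag_unit n r * Q * (R * diag_unit n s * S))
      = mtrace (P * (diag_unit n r * Q * R * diag_unit n s * S))"
    using assms by (simp add: assoc_mult_mat[of _ n n _ n _ n] mult_carrier_mat[of _ n n _ n])
  also have "\<dots> = mtrace (diag_unit n r * Q * R * diag_unit n s * S * P)"
    using assms by (intro mtrace_mult_comm) auto
  also have "\<dots> = mtrace (diag_unit n r * (Q * R * diag_unit n s * (S * P)))"
    using assms by (simp add: assoc_mult_mat[of _ n n _ n _ n] mult_carrier_mat[of _ n n _ n])
  also have "\<dots> = (Q * R * diag_unit n s * (S * P)) $$ (r, r)"
    using assms by (intro mtrace_diag_unit_mult) auto
  also have "\<dots> = (Q * R) $$ (r, s) * (S * P) $$ (s, r)"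
    using assms by (intro mult_diag_unit_mult_index) auto
  finally show ?thesis .
qed

lemma conjugate_eq_zero_iff:
  fixes P Q X :: "'a::comm_ring_1 mat"
  assumes "P \<in> carrier_mat n n" "Q \<in> carrier_mat n n" "X \<in> carrier_mat n n" "Q * P = 1\<^sub>m n"
  shows "P * X * Q = 0\<^sub>m n n \<longleftrightarrow> X = 0\<^sub>m n n"
proof
  assume zero: "P * X * Q = 0\<^sub>m n n"
  have "X = (Q * P) * X * (Q * P)" using assms by simp
  also have "\<dots> = Q * (P * X * Q) * P"
    using assms(1-3) by (simp add: assoc_mult_mat[of _ n n _ n _ n])
  finally show "X = 0\<^sub>m n n" using zero assms by simp
qed (use assms in simp)

lemma prim_idem_carrier:
  assumes "A \<in> carrier_mat (Suc d) (Suc d)"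
  shows "prim_idem d A th k \<in> carrier_mat (Suc d) (Suc d)"
proof -
  have "foldr (\<lambda>j M. ((1 / (th k - th j)) \<cdot>\<^sub>m (A - th j \<cdot>\<^sub>m 1\<^sub>m (Suc d))) * M) js (1\<^sub>m (Suc d))
      \<in> carrier_mat (Suc d) (Suc d)" for js
    using assms by (induction js) auto
  then show ?thesis unfolding prim_idem_def Suc_eq_plus1[symmetric] .
qed

lemma eigenvector_smult_shift:
  fixes A :: "'a::field mat"
  assumes A: "A \<in> carrier_mat n n" and v: "v \<in> carrier_vec n" and Av: "A *\<^sub>v v = t \<cdot>\<^sub>v v"
  shows "(c \<cdot>\<^sub>m (A - s \<cdot>\<^sub>m 1\<^sub>m n)) *\<^sub>v v = (c * (t - s)) \<cdot>\<^sub>v v"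
proof (rule eq_vecI)
  fix i assume "i < dim_vec ((c * (t - s)) \<cdot>\<^sub>v v)"
  then have i: "i < n" using v by simp
  have "row (c \<cdot>\<^sub>m (A - s \<cdot>\<^sub>m 1\<^sub>m n)) i = c \<cdot>\<^sub>v (row A i - s \<cdot>\<^sub>v unit_vec n i)"
    using A i by (intro eq_vecI) auto
  moreover have "row A i \<bullet> v = t * v $ i"
    using arg_cong[OF Av, of "\<lambda>w. w $ i"] A v i by simp
  ultimately show "((c \<cdot>\<^sub>m (A - s \<cdot>\<^sub>m 1\<^sub>m n)) *\<^sub>v v) $ i = ((c * (t - s)) \<cdot>\<^sub>v v) $ i"
    using A v i by (simp add: minus_scalar_prod_distrib[of _ n] algebra_simps)
qed (use A v in auto)

lemma prim_idem_mult_eigenvector_prod: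
  fixes A :: "'a::field mat"
  assumes A: "A \<in> carrier_mat (Suc d) (Suc d)" and v: "v \<in> carrier_vec (Suc d)"
    and Av: "A *\<^sub>v v = t \<cdot>\<^sub>v v"
  shows "prim_idem d A th k *\<^sub>v v
    = prod_list (map (\<lambda>j. (t - th j) / (th k - th j)) (filter (\<lambda>j. j \<noteq> k) [0..<Suc d])) \<cdot>\<^sub>v v"
proof -
  let ?c = "\<lambda>j. (t - th j) / (th k - th j)"
  have factor: "((1 / (th k - th j)) \<cdot>\<^sub>m (A - th j \<cdot>\<^sub>m 1\<^sub>m (Suc d))) *\<^sub>v v = ?c j \<cdot>\<^sub>v v" for j
    using eigenvector_smult_shift[OF A v Av] by simp
  have "foldr (\<lambda>j M. ((1 / (th k - th j)) \<cdot>\<^sub>m (A - th j \<cdot>\<^sub>m 1\<^sub>m (Suc d))) * M)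
      js (1\<^sub>m (Suc d)) *\<^sub>v v = prod_list (map ?c js) \<cdot>\<^sub>v v" for js
  proof (induction js)
    case (Cons j js)
    let ?M = "(1 / (th k - th j)) \<cdot>\<^sub>m (A - th j \<cdot>\<^sub>m 1\<^sub>m (Suc d))"
    let ?F = "foldr (\<lambda>j M. ((1 / (th k - th j)) \<cdot>\<^sub>m (A - th j \<cdot>\<^sub>m 1\<^sub>m (Suc d))) * M)
      js (1\<^sub>m (Suc d))"
    have M: "?M \<in> carrier_mat (Suc d) (Suc d)" using A by auto
    have F: "?F \<in> carrier_mat (Suc d) (Suc d)" using A by (induction js) auto
    have "(?M * ?F) *\<^sub>v v = ?M *\<^sub>v (?F *\<^sub>v v)" by (rule assoc_mult_mat_vec[OF M F v])
    also have "\<dots> = prod_list (map ?c js) \<cdot>\<^sub>v (?M *\<^sub>v v)"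
      using Cons.IH mult_mat_vec[OF M v] by simp
    also have "\<dots> = prod_list (map ?c (j # js)) \<cdot>\<^sub>v v"
      by (simp add: factor smult_smult_assoc mult.commute)
    finally show ?case by simp
  qed (use v in simp)
  then show ?thesis unfolding prim_idem_def Suc_eq_plus1[symmetric] .
qed

lemma prim_idem_mult_eigenvector:
  fixes A :: "'a::field mat"
  assumes A: "A \<in> carrier_mat (Suc d) (Suc d)" and inj: "inj_on th {0..d}"
    and k: "k \<le> d" and l: "l \<le> d" and v: "v \<in> carrier_vec (Suc d)"
    and Av: "A *\<^sub>v v = th l \<cdot>\<^sub>v v"
  shows "prim_idem d A th k *\<^sub>v v = of_bool (l = k) \<cdot>\<^sub>v v"
proof -
  let ?c = "\<lambda>j. (th l - th j) / (th k - th j)"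
  have "prod_list (map ?c (filter (\<lambda>j. j \<noteq> k) [0..<Suc d])) = of_bool (l = k)"
  proof (cases "l = k")
    case True
    have "th k \<noteq> th j" if "j \<le> d" "j \<noteq> k" for j
      using inj_onD[OF inj, of k j] that k by auto
    then show ?thesis using True by (auto intro!: prod_list_neutral)
  next
    case False
    then have "l \<in> set (filter (\<lambda>j. j \<noteq> k) [0..<Suc d])" using l by auto
    then show ?thesis
      using False image_eqI[of 0 ?c l] by (simp del: upt_Suc add: prod_list_zero_iff)
  qed
  then show ?thesis using prim_idem_mult_eigenvector_prod[OF A v Av, of th k] by simp
qed

lemma mult_mat_of_eigenvectors:
  fixes M :: "'a::field mat"
  assumes M: "M \<in> carrier_mat n n" and v: "\<And>j. j < n \<Longrightarrow> v j \<in> carrier_vec n"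
    and Mv: "\<And>j. j < n \<Longrightarrow> M *\<^sub>v v j = f j \<cdot>\<^sub>v v j"
  shows "M * mat n n (\<lambda>(i, j). v j $ i) = mat n n (\<lambda>(i, j). v j $ i) * mat_diag n f"
    (is "M * ?V = ?V * _")
proof (rule eq_matI)
  have V: "?V \<in> carrier_mat n n" by simp
  fix i j assume "i < dim_row (?V * mat_diag n f)" "j < dim_col (?V * mat_diag n f)"
  then have ij: "i < n" "j < n" by (auto simp: mat_diag_def)
  have "col ?V j = v j" using v[of j] ij by (auto intro!: eq_vecI)
  then have "(M * ?V) $$ (i, j) = (M *\<^sub>v v j) $ i" using M ij by simp
  then show "(M * ?V) $$ (i, j) = (?V * mat_diag n f) $$ (i, j)"
    using ij Mv[of j] v[of j] by (simp add: mat_diag_mult_right[OF V])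
qed (use M in \<open>auto simp: mat_diag_def\<close>)

(* Independence of eigenvectors for distinct eigenvalues, phrased through the projections
   onto them. *)
lemma det_ne_zero_of_column_projections:
  fixes V :: "'a::field mat"
  assumes V: "V \<in> carrier_mat n n" and cols: "\<And>k. k < n \<Longrightarrow> col V k \<noteq> 0\<^sub>v n"
    and proj: "\<And>k. k < n \<Longrightarrow> \<exists>P \<in> carrier_mat n n. P * V = V * diag_unit n k"
  shows "det V \<noteq> 0"
proof
  assume "det V = 0"
  then obtain c where c: "c \<in> carrier_vec n" "c \<noteq> 0\<^sub>v n" "V *\<^sub>v c = 0\<^sub>v n"
    using det_0_iff_vec_prod_zero_field[OF V] by blast
  have "c $ k = 0" if k: "k < n" for k
  proof -
    obtain P where P: "P \<in> carrier_mat n n" "P * V = V * diag_unit n k"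
      using proj[OF k] by blast
    have "(V * diag_unit n k) *\<^sub>v c = P *\<^sub>v (V *\<^sub>v c)"
      using P V c by (metis assoc_mult_mat_vec)
    also have "\<dots> = 0\<^sub>v n"
      using c P by (intro eq_vecI) auto
    finally have zero: "(V * diag_unit n k) *\<^sub>v c = 0\<^sub>v n" .
    have "V $$ (i, k) * c $ k = 0" if "i < n" for i
      using arg_cong[OF zero, of "\<lambda>w. w $ i"] that c k V
      by (simp add: diag_unit_def mat_diag_mult_right[OF V] scalar_prod_def
          mult.commute[of _ "of_bool _"] mult.assoc)
    then show ?thesis using cols[OF k] V k by (auto intro!: eq_vecI)
  qed
  then have "c = 0\<^sub>v n" using c(1) by (intro eq_vecI) auto
  with c(2) show False ..
qed

lemma prim_idem_diagonalization:
  fixes A :: "'a::field mat"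
  assumes A: "A \<in> carrier_mat (Suc d) (Suc d)" and inj: "inj_on th {0..d}"
    and ev: "\<forall>i\<le>d. eigenvalue A (th i)"
  obtains V Vi where "V \<in> carrier_mat (Suc d) (Suc d)" "Vi \<in> carrier_mat (Suc d) (Suc d)"
    "V * Vi = 1\<^sub>m (Suc d)" "Vi * V = 1\<^sub>m (Suc d)" "A * V = V * mat_diag (Suc d) th"
    "\<And>k. k \<le> d \<Longrightarrow> prim_idem d A th k = V * diag_unit (Suc d) k * Vi"
proof -
  let ?n = "Suc d"
  have "\<exists>w. w \<in> carrier_vec ?n \<and> w \<noteq> 0\<^sub>v ?n \<and> A *\<^sub>v w = th i \<cdot>\<^sub>v w" if "i \<le> d" for i
    using ev that A unfolding eigenvalue_def eigenvector_def by auto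
  then obtain v where
    v: "\<And>i. i \<le> d \<Longrightarrow> v i \<in> carrier_vec ?n \<and> v i \<noteq> 0\<^sub>v ?n \<and> A *\<^sub>v v i = th i \<cdot>\<^sub>v v i"
    by metis
  define V where "V = mat ?n ?n (\<lambda>(i, j). v j $ i)"
  have V: "V \<in> carrier_mat ?n ?n" by (simp add: V_def)
  have AV: "A * V = V * mat_diag ?n th"
    unfolding V_def using v by (intro mult_mat_of_eigenvectors A) auto
  have PV: "prim_idem d A th k * V = V * diag_unit ?n k" if "k \<le> d" for k
    unfolding V_def diag_unit_def using v that
    by (intro mult_mat_of_eigenvectors prim_idem_carrier A prim_idem_mult_eigenvector inj) auto
  have "col V k = v k" if "k < ?n" for k
    using v[of k] that by (auto simp: V_def intro!: eq_vecI)
  then have "col V k \<noteq> 0\<^sub>v ?n" if "k < ?n" for k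
    using v[of k] that by simp
  moreover have "\<exists>P \<in> carrier_mat ?n ?n. P * V = V * diag_unit ?n k" if "k < ?n" for k
    using PV[of k] prim_idem_carrier[OF A, of th k] that by auto
  ultimately have "det V \<noteq> 0" by (rule det_ne_zero_of_column_projections[OF V])
  then obtain Vi where Vi: "Vi \<in> carrier_mat ?n ?n" and ViV: "Vi * V = 1\<^sub>m ?n"
    using det_non_zero_imp_unit[OF V, of "()"] unfolding Units_def ring_mat_def by auto
  have VVi: "V * Vi = 1\<^sub>m ?n" using mat_mult_left_right_inverse[OF Vi V ViV] .
  have "prim_idem d A th k = V * diag_unit ?n k * Vi" if "k \<le> d" for k
  proof -
    have "prim_idem d A th k = prim_idem d A th k * V * Vi"
      using prim_idem_carrier[OF A, of th k] V Vi VVi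
      by (simp add: assoc_mult_mat[of _ ?n ?n _ ?n _ ?n])
    then show ?thesis using PV[OF that] by simp
  qed
  with V Vi VVi ViV AV show ?thesis using that by blast
qed

definition tridiagonal_with_coeffs ::
  "nat \<Rightarrow> (nat \<Rightarrow> 'a) \<Rightarrow> (nat \<Rightarrow> 'a) \<Rightarrow> 'a::comm_ring_1 mat \<Rightarrow> bool" where
  "tridiagonal_with_coeffs d a x T \<longleftrightarrow> T \<in> carrier_mat (Suc d) (Suc d) \<and>
     (\<forall>j\<le>d. \<forall>k\<le>d. Suc j < k \<or> Suc k < j \<longrightarrow> T $$ (j, k) = 0) \<and>
     (\<forall>j\<le>d. T $$ (j, j) = a j) \<and>
     (\<forall>j<d. T $$ (Suc j, j) * T $$ (j, Suc j) = x (Suc j))"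

lemma tridiagonal_with_coeffs_carrier:
  "tridiagonal_with_coeffs d a x T \<Longrightarrow> T \<in> carrier_mat (Suc d) (Suc d)"
  by (simp add: tridiagonal_with_coeffs_def)

lemma tridiagonal_with_coeffs_transpose:
  "tridiagonal_with_coeffs d a x T \<Longrightarrow> tridiagonal_with_coeffs d a x (transpose_mat T)"
  by (auto simp: tridiagonal_with_coeffs_def mult.commute)

lemma tridiagonal_offdiag_prod:
  assumes "tridiagonal_with_coeffs d a x T" "i \<le> d"
  shows "(\<Prod>l<i. T $$ (l, Suc l)) * (\<Prod>l<i. T $$ (Suc l, l)) = (\<Prod>k\<in>{1..i}. x k)"
proof -
  have "(\<Prod>l<i. T $$ (l, Suc l)) * (\<Prod>l<i. T $$ (Suc l, l)) = (\<Prod>l<i. x (Suc l))"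
    using assms unfolding prod.distrib[symmetric]
    by (intro prod.cong) (auto simp: tridiagonal_with_coeffs_def mult.commute)
  then show ?thesis by (simp add: prod.atLeast1_atMost_eq)
qed

(* Row j of T u = theta u is the recurrence defining ls_p, scaled by the superdiagonal. *)
lemma tridiagonal_eigenvector_entries:
  fixes T :: "'a::field mat"
  assumes T: "tridiagonal_with_coeffs d a x T" and u: "u \<in> carrier_vec (Suc d)"
    and Tu: "T *\<^sub>v u = \<theta> \<cdot>\<^sub>v u" and "i \<le> d"
  shows "u $ i * (\<Prod>l<i. T $$ (l, Suc l)) = u $ 0 * poly (ls_p a x i) \<theta>"
proof -
  note T_carrier = tridiagonal_with_coeffs_carrier[OF T]
  have band: "\<theta> * u $ j = (\<Sum>k\<in>K. T $$ (j, k) * u $ k)"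
    if "j \<le> d" "K \<subseteq> {..d}" "\<And>k. k \<le> d \<Longrightarrow> k \<notin> K \<Longrightarrow> Suc j < k \<or> Suc k < j" for j K
  proof -
    have "\<theta> * u $ j = (\<Sum>k\<le>d. T $$ (j, k) * u $ k)"
      using arg_cong[OF Tu, of "\<lambda>w. w $ j"] T_carrier u that(1)
      by (simp add: scalar_prod_def lessThan_Suc_atMost atLeast0LessThan)
    also have "\<dots> = (\<Sum>k\<in>K. T $$ (j, k) * u $ k)"
      using T that by (intro sum.mono_neutral_right) (auto simp: tridiagonal_with_coeffs_def)
    finally show ?thesis .
  qed
  from \<open>i \<le> d\<close> show ?thesis
  proof (induction i rule: induct_nat_012)
    case 0
    then show ?case by simp
  next
    case 1
    have "\<theta> * u $ 0 = (\<Sum>k\<in>{0, 1}. T $$ (0, k) * u $ k)"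
      using 1 by (intro band) auto
    then show ?case using 1 T by (simp add: tridiagonal_with_coeffs_def algebra_simps)
  next
    case (ge2 j)
    let ?\<beta> = "\<lambda>i. \<Prod>l<i. T $$ (l, Suc l)"
    have "\<theta> * u $ Suc j = (\<Sum>k\<in>{j, Suc j, Suc (Suc j)}. T $$ (Suc j, k) * u $ k)"
      using ge2.prems by (intro band) auto
    then have row: "T $$ (Suc j, Suc (Suc j)) * u $ Suc (Suc j)
        = (\<theta> - a (Suc j)) * u $ Suc j - T $$ (Suc j, j) * u $ j"
      using ge2.prems T by (simp add: tridiagonal_with_coeffs_def algebra_simps)
    have x: "x (Suc j) = T $$ (Suc j, j) * T $$ (j, Suc j)"
      using T ge2.prems by (simp add: tridiagonal_with_coeffs_def)
    have "u $ Suc (Suc j) * ?\<beta> (Suc (Suc j))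
        = (T $$ (Suc j, Suc (Suc j)) * u $ Suc (Suc j)) * ?\<beta> (Suc j)"
      by (simp add: mult_ac)
    also have "\<dots> = (\<theta> - a (Suc j)) * (u $ Suc j * ?\<beta> (Suc j)) - x (Suc j) * (u $ j * ?\<beta> j)"
      unfolding row x by (simp add: algebra_simps)
    also have "\<dots> = u $ 0 * poly (ls_p a x (Suc (Suc j))) \<theta>"
      using ge2.IH ge2.prems by (simp add: algebra_simps)
    finally show ?case .
  qed
qed

lemma tridiagonal_right_eigenmatrix_entries:
  fixes T U :: "'a::field mat"
  assumes T: "tridiagonal_with_coeffs d a x T" and U: "U \<in> carrier_mat (Suc d) (Suc d)"
    and TU: "T * U = U * mat_diag (Suc d) \<theta>" and i: "i \<le> d" and r: "r \<le> d"
  shows "U $$ (i, r) * (\<Prod>l<i. T $$ (l, Suc l)) = U $$ (0, r) * poly (ls_p a x i) (\<theta> r)"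
proof -
  note T_carrier = tridiagonal_with_coeffs_carrier[OF T]
  have "T *\<^sub>v col U r = col (T * U) r" using col_mult2[OF T_carrier U, of r] r by simp
  also have "\<dots> = \<theta> r \<cdot>\<^sub>v col U r"
    unfolding TU using U r by (auto simp: mat_diag_mult_right[OF U] intro!: eq_vecI)
  finally have "T *\<^sub>v col U r = \<theta> r \<cdot>\<^sub>v col U r" .
  from tridiagonal_eigenvector_entries[OF T col_carrier_vec[OF _ U] this i] show ?thesis
    using U i r by simp
qed

lemma tridiagonal_left_eigenmatrix_entries:
  fixes T Ui :: "'a::field mat"
  assumes T: "tridiagonal_with_coeffs d a x T" and Ui: "Ui \<in> carrier_mat (Suc d) (Suc d)"
    and UiT: "Ui * T = mat_diag (Suc d) \<theta> * Ui" and i: "i \<le> d" and r: "r \<le> d"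
  shows "Ui $$ (r, i) * (\<Prod>l<i. T $$ (Suc l, l)) = Ui $$ (r, 0) * poly (ls_p a x i) (\<theta> r)"
proof -
  note T_carrier = tridiagonal_with_coeffs_carrier[OF T]
  have diag: "transpose_mat (mat_diag (Suc d) \<theta>) = mat_diag (Suc d) \<theta>"
    by (auto simp: mat_diag_def intro!: eq_matI)
  have "transpose_mat T * transpose_mat Ui = transpose_mat (Ui * T)"
    using transpose_mult[OF Ui T_carrier] by simp
  also have "\<dots> = transpose_mat Ui * mat_diag (Suc d) \<theta>"
    unfolding UiT transpose_mult[OF mat_diag_dim Ui] diag ..
  finally have "transpose_mat T * transpose_mat Ui = transpose_mat Ui * mat_diag (Suc d) \<theta>" .
  from tridiagonal_right_eigenmatrix_entries[OF tridiagonal_with_coeffs_transpose[OF T] _ this i r]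
  show ?thesis using Ui T_carrier i r by simp
qed

lemma intertwining_inverse:
  fixes T U Ui D :: "'a::comm_ring_1 mat"
  assumes "T \<in> carrier_mat n n" "U \<in> carrier_mat n n" "Ui \<in> carrier_mat n n" "D \<in> carrier_mat n n"
    and "U * Ui = 1\<^sub>m n" "Ui * U = 1\<^sub>m n" and TU: "T * U = U * D"
  shows "Ui * T = D * Ui"
proof -
  have "Ui * T = Ui * T * (U * Ui)" using assms by simp
  also have "\<dots> = Ui * (T * U) * Ui" using assms(1-4) by (simp add: assoc_mult_mat[of _ n n _ n _ n])
  also have "\<dots> = (Ui * U) * D * Ui"
    unfolding TU using assms(1-4) by (simp add: assoc_mult_mat[of _ n n _ n _ n])
  also have "\<dots> = D * Ui" unfolding \<open>Ui * U = 1\<^sub>m n\<close> using assms by simp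
  finally show ?thesis .
qed

lemma tridiagonal_orthogonality:
  fixes T U Ui :: "'a::field mat"
  assumes T: "tridiagonal_with_coeffs d a x T"
    and U: "U \<in> carrier_mat (Suc d) (Suc d)" and Ui: "Ui \<in> carrier_mat (Suc d) (Suc d)"
    and inv: "U * Ui = 1\<^sub>m (Suc d)" "Ui * U = 1\<^sub>m (Suc d)"
    and TU: "T * U = U * mat_diag (Suc d) \<theta>" and i: "i \<le> d" and j: "j \<le> d"
  shows "(\<Sum>r\<le>d. poly (ls_p a x i) (\<theta> r) * poly (ls_p a x j) (\<theta> r) * (Ui $$ (r, 0) * U $$ (0, r)))
    = (if i = j then \<Prod>k\<in>{1..i}. x k else 0)"
proof -
  let ?\<beta> = "\<lambda>i. \<Prod>l<i. T $$ (l, Suc l)" and ?\<gamma> = "\<lambda>i. \<Prod>l<i. T $$ (Suc l, l)"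
  note T_carrier = tridiagonal_with_coeffs_carrier[OF T]
  have UiT: "Ui * T = mat_diag (Suc d) \<theta> * Ui"
    using intertwining_inverse[OF T_carrier U Ui mat_diag_dim inv TU] .
  have index: "(U * Ui) $$ (i, j) = (\<Sum>r\<le>d. U $$ (i, r) * Ui $$ (r, j))"
    using U Ui i j by (simp add: scalar_prod_def lessThan_Suc_atMost atLeast0LessThan)
  have "(\<Sum>r\<le>d. poly (ls_p a x i) (\<theta> r) * poly (ls_p a x j) (\<theta> r) * (Ui $$ (r, 0) * U $$ (0, r)))
      = (\<Sum>r\<le>d. (U $$ (i, r) * ?\<beta> i) * (Ui $$ (r, j) * ?\<gamma> j))"
    using tridiagonal_right_eigenmatrix_entries[OF T U TU i]
      tridiagonal_left_eigenmatrix_entries[OF T Ui UiT j]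
    by (intro sum.cong) (simp_all add: mult_ac)
  also have "\<dots> = (U * Ui) $$ (i, j) * (?\<beta> i * ?\<gamma> j)"
    unfolding index by (simp add: sum_distrib_left sum_distrib_right mult_ac)
  also have "\<dots> = (if i = j then ?\<beta> i * ?\<gamma> i else 0)"
    using inv i j by simp
  finally show ?thesis unfolding tridiagonal_offdiag_prod[OF T i] .
qed

lemma tridiagonal_dual_orthogonality:
  fixes T U Ui :: "'a::field mat"
  assumes T: "tridiagonal_with_coeffs d a x T"
    and U: "U \<in> carrier_mat (Suc d) (Suc d)" and Ui: "Ui \<in> carrier_mat (Suc d) (Suc d)"
    and inv: "U * Ui = 1\<^sub>m (Suc d)" "Ui * U = 1\<^sub>m (Suc d)"
    and TU: "T * U = U * mat_diag (Suc d) \<theta>" and x_nonzero: "\<forall>k\<in>{1..d}. x k \<noteq> 0"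
    and r: "r \<le> d" and s: "s \<le> d"
  shows "(\<Sum>i\<le>d. poly (ls_p a x i) (\<theta> r) * poly (ls_p a x i) (\<theta> s) / (\<Prod>k\<in>{1..i}. x k))
    = (if r = s then inverse (Ui $$ (r, 0) * U $$ (0, r)) else 0)"
proof -
  define S where
    "S r s = (\<Sum>i\<le>d. poly (ls_p a x i) (\<theta> r) * poly (ls_p a x i) (\<theta> s) / (\<Prod>k\<in>{1..i}. x k))"
    for r s
  note T_carrier = tridiagonal_with_coeffs_carrier[OF T]
  have UiT: "Ui * T = mat_diag (Suc d) \<theta> * Ui"
    using intertwining_inverse[OF T_carrier U Ui mat_diag_dim inv TU] .
  let ?\<beta> = "\<lambda>i. \<Prod>l<i. T $$ (l, Suc l)" and ?\<gamma> = "\<lambda>i. \<Prod>l<i. T $$ (Suc l, l)"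
  have S_inverse: "Ui $$ (r, 0) * U $$ (0, s) * S r s = of_bool (r = s)"
    if r: "r \<le> d" and s: "s \<le> d" for r s
  proof -
    have summand: "Ui $$ (r, i) * U $$ (i, s)
        = Ui $$ (r, 0) * U $$ (0, s) * (poly (ls_p a x i) (\<theta> r) * poly (ls_p a x i) (\<theta> s)
            / (\<Prod>k\<in>{1..i}. x k))" if i: "i \<le> d" for i
    proof -
      have "Ui $$ (r, i) * U $$ (i, s) * (\<Prod>k\<in>{1..i}. x k)
          = (Ui $$ (r, i) * ?\<gamma> i) * (U $$ (i, s) * ?\<beta> i)"
        unfolding tridiagonal_offdiag_prod[OF T i, symmetric] by (simp only: mult_ac)
      also have "\<dots> = Ui $$ (r, 0) * U $$ (0, s)
          * (poly (ls_p a x i) (\<theta> r) * poly (ls_p a x i) (\<theta> s))"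
        unfolding tridiagonal_right_eigenmatrix_entries[OF T U TU i s]
          tridiagonal_left_eigenmatrix_entries[OF T Ui UiT i r]
        by (simp only: mult_ac)
      finally show ?thesis
        using x_nonzero i by (simp add: eq_divide_eq)
    qed
    have "Ui $$ (r, 0) * U $$ (0, s) * S r s = (\<Sum>i\<le>d. Ui $$ (r, i) * U $$ (i, s))"
      unfolding S_def sum_distrib_left by (intro sum.cong refl) (metis atMost_iff summand)
    also have "\<dots> = (Ui * U) $$ (r, s)"
      using U Ui r s by (simp add: scalar_prod_def lessThan_Suc_atMost atLeast0LessThan)
    finally show ?thesis using inv r s by simp
  qed
  show ?thesis
  proof (cases "r = s")
    case True
    have "inverse (Ui $$ (r, 0) * U $$ (0, r)) = S r r"
      using S_inverse[OF r r] by (intro inverse_unique) simp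
    then show ?thesis using True unfolding S_def by simp
  next
    case False
    (* the diagonal instances of S_inverse show that Ui_r0 and U_0s never vanish *)
    have "Ui $$ (r, 0) \<noteq> 0" "U $$ (0, s) \<noteq> 0"
      using S_inverse[OF r r] S_inverse[OF s s] by auto
    then show ?thesis using S_inverse[OF r s] False unfolding S_def by simp
  qed
qed

lemma change_of_basis:
  fixes A V Vi W Wi D :: "'a::comm_ring_1 mat"
  assumes A: "A \<in> carrier_mat n n" and D: "D \<in> carrier_mat n n"
    and V: "V \<in> carrier_mat n n" "Vi \<in> carrier_mat n n" "V * Vi = 1\<^sub>m n" "Vi * V = 1\<^sub>m n"
    and W: "W \<in> carrier_mat n n" "Wi \<in> carrier_mat n n" "W * Wi = 1\<^sub>m n" "Wi * W = 1\<^sub>m n"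
    and AV: "A * V = V * D"
  shows "(Wi * V) * (Vi * W) = 1\<^sub>m n" "(Vi * W) * (Wi * V) = 1\<^sub>m n"
    and "(Wi * A * W) * (Wi * V) = (Wi * V) * D"
proof -
  note assoc = assoc_mult_mat[of _ n n _ n _ n] mult_carrier_mat[of _ n n _ n]
  have "(Wi * V) * (Vi * W) = Wi * (V * Vi) * W" "(Vi * W) * (Wi * V) = Vi * (W * Wi) * V"
    using V(1,2) W(1,2) by (simp_all add: assoc)
  then show "(Wi * V) * (Vi * W) = 1\<^sub>m n" "(Vi * W) * (Wi * V) = 1\<^sub>m n"
    using V W by simp_all
  have "(Wi * A * W) * (Wi * V) = Wi * A * (W * Wi) * V"
    using A V(1,2) W(1,2) by (simp add: assoc)
  also have "\<dots> = Wi * (A * V)" using A V(1,2) W by (simp add: assoc)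
  also have "\<dots> = (Wi * V) * D" unfolding AV using D V(1,2) W(1,2) by (simp add: assoc)
  finally show "(Wi * A * W) * (Wi * V) = (Wi * V) * D" .
qed

lemma conjugate_diag_units_coeffs:
  fixes A :: "'a::field mat"
  assumes A: "A \<in> carrier_mat (Suc d) (Suc d)"
    and W: "W \<in> carrier_mat (Suc d) (Suc d)" and Wi: "Wi \<in> carrier_mat (Suc d) (Suc d)"
    and WiW: "Wi * W = 1\<^sub>m (Suc d)"
    and Es: "\<And>k. k \<le> d \<Longrightarrow> Es k = W * diag_unit (Suc d) k * Wi"
  shows "\<lbrakk>i \<le> d; j \<le> d\<rbrakk>
      \<Longrightarrow> Es i * A * Es j = 0\<^sub>m (Suc d) (Suc d) \<longleftrightarrow> (Wi * A * W) $$ (i, j) = 0"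
    and "j \<le> d \<Longrightarrow> ls_a A Es j = (Wi * A * W) $$ (j, j)"
    and "j < d \<Longrightarrow> ls_x A Es (Suc j) = (Wi * A * W) $$ (Suc j, j) * (Wi * A * W) $$ (j, Suc j)"
proof -
  let ?n = "Suc d" and ?e = "diag_unit (Suc d)" and ?Y = "Wi * A * W"
  have Y: "?Y \<in> carrier_mat ?n ?n" using A W Wi by simp
  note assoc = assoc_mult_mat[of _ ?n ?n _ ?n _ ?n] mult_carrier_mat[of _ ?n ?n _ ?n]
  show "Es i * A * Es j = 0\<^sub>m ?n ?n \<longleftrightarrow> ?Y $$ (i, j) = 0" if "i \<le> d" "j \<le> d"
  proof -
    have "Es i * A * Es j = W * (?e i * ?Y * ?e j) * Wi"
      using that A W Wi by (simp add: Es assoc)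
    also have "\<dots> = 0\<^sub>m ?n ?n \<longleftrightarrow> ?e i * ?Y * ?e j = 0\<^sub>m ?n ?n"
      by (rule conjugate_eq_zero_iff[OF W Wi _ WiW]) (use Y in \<open>simp add: assoc\<close>)
    also have "\<dots> \<longleftrightarrow> ?Y $$ (i, j) = 0"
      by (rule diag_unit_mult_diag_unit_eq_zero_iff[OF Y]) (use that in auto)
    finally show ?thesis .
  qed
  show "ls_a A Es j = ?Y $$ (j, j)" if "j \<le> d"
  proof -
    have "ls_a A Es j = mtrace (W * (?e j * Wi * A))"
      unfolding ls_a_def using that A W Wi by (simp add: Es assoc)
    also have "\<dots> = mtrace (?e j * ?Y)"
      using A W Wi by (subst mtrace_mult_comm[of _ ?n ?n]) (auto simp: assoc)
    also have "\<dots> = ?Y $$ (j, j)" using Y that by (simp add: mtrace_diag_unit_mult)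
    finally show ?thesis .
  qed
  show "ls_x A Es (Suc j) = ?Y $$ (Suc j, j) * ?Y $$ (j, Suc j)" if "j < d"
  proof -
    have "ls_x A Es (Suc j) = mtrace (W * ?e (Suc j) * (Wi * A) * (W * ?e j * (Wi * A)))"
      unfolding ls_x_def using that A W Wi by (simp add: Es assoc)
    also have "\<dots> = ?Y $$ (Suc j, j) * ?Y $$ (j, Suc j)"
      using that A W Wi by (intro mtrace_diag_unit_products) auto
    finally show ?thesis .
  qed
qed

lemma leonard_system_tridiagonal:
  fixes A As :: "'a::field mat"
  assumes L: "leonard_system d A As E Es"
    and W: "W \<in> carrier_mat (Suc d) (Suc d)" and Wi: "Wi \<in> carrier_mat (Suc d) (Suc d)"
    and WiW: "Wi * W = 1\<^sub>m (Suc d)"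
    and Es: "\<And>k. k \<le> d \<Longrightarrow> Es k = W * diag_unit (Suc d) k * Wi"
  shows "tridiagonal_with_coeffs d (ls_a A Es) (ls_x A Es) (Wi * A * W)"
    and "\<forall>k\<in>{1..d}. ls_x A Es k \<noteq> 0"
proof -
  let ?n = "Suc d" and ?Y = "Wi * A * W"
  have A: "A \<in> carrier_mat ?n ?n"
    using L by (simp add: leonard_system_def multiplicity_free_def)
  note coeffs = conjugate_diag_units_coeffs[OF A W Wi WiW Es]
  have Es_A_Es: "(Suc j < i \<or> Suc i < j \<longrightarrow> Es i * A * Es j = 0\<^sub>m ?n ?n)
      \<and> (i = Suc j \<or> j = Suc i \<longrightarrow> Es i * A * Es j \<noteq> 0\<^sub>m ?n ?n)" if "i \<le> d" "j \<le> d" for i j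
    using L that unfolding leonard_system_def by simp
  have band: "?Y $$ (j, k) = 0" if "j \<le> d" "k \<le> d" "Suc j < k \<or> Suc k < j" for j k
    using Es_A_Es[of j k] coeffs(1)[of j k] that by auto
  have offdiag: "?Y $$ (Suc j, j) \<noteq> 0" "?Y $$ (j, Suc j) \<noteq> 0" if "j < d" for j
    using Es_A_Es[of "Suc j" j] Es_A_Es[of j "Suc j"]
      coeffs(1)[of "Suc j" j] coeffs(1)[of j "Suc j"] that
    by auto
  show "tridiagonal_with_coeffs d (ls_a A Es) (ls_x A Es) ?Y"
    unfolding tridiagonal_with_coeffs_def using A W Wi band coeffs(2,3) by simp
  show "\<forall>k\<in>{1..d}. ls_x A Es k \<noteq> 0"
  proof
    fix k assume "k \<in> {1..d}"
    then obtain j where "k = Suc j" "j < d" by (cases k) auto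
    then show "ls_x A Es k \<noteq> 0" using coeffs(3) offdiag by simp
  qed
qed

theorem theorem18p4:
  fixes d :: nat and A As :: "'a::field mat" and E Es :: "nat \<Rightarrow> 'a mat"
    and th :: "nat \<Rightarrow> 'a"
  assumes "leonard_system d A As E Es"
    and "inj_on th {0..d}" and "\<forall>i\<le>d. eigenvalue A (th i)"
    and "\<forall>i\<le>d. E i = prim_idem d A th i"
  shows "(\<forall>i\<le>d. \<forall>j\<le>d.
            (\<Sum>r\<le>d. poly (ls_p (ls_a A Es) (ls_x A Es) i) (th r)
                    * poly (ls_p (ls_a A Es) (ls_x A Es) j) (th r) * ls_m E Es r)
            = (if i = j then (\<Prod>k\<in>{1..i}. ls_x A Es k) else 0))
       \<and> (\<forall>r\<le>d. \<forall>s\<le>d.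
            (\<Sum>i\<le>d. poly (ls_p (ls_a A Es) (ls_x A Es) i) (th r)
                    * poly (ls_p (ls_a A Es) (ls_x A Es) i) (th s)
                    / (\<Prod>k\<in>{1..i}. ls_x A Es k))
            = (if r = s then inverse (ls_m E Es r) else 0))"
proof -
  let ?n = "Suc d"
  have A: "A \<in> carrier_mat ?n ?n" and As: "As \<in> carrier_mat ?n ?n"
    using assms(1) by (simp_all add: leonard_system_def multiplicity_free_def)
  obtain ths where ths: "inj_on ths {0..d}" "\<forall>i\<le>d. eigenvalue As (ths i)"
    "\<forall>i\<le>d. Es i = prim_idem d As ths i"
    using assms(1) by (auto simp: leonard_system_def idem_ordering_def)
  obtain W Wi where W: "W \<in> carrier_mat ?n ?n" "Wi \<in> carrier_mat ?n ?n"
    "W * Wi = 1\<^sub>m ?n" "Wi * W = 1\<^sub>m ?n" and Es: "\<And>k. k \<le> d \<Longrightarrow> Es k = W * diag_unit ?n k * Wi"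
    using prim_idem_diagonalization[OF As ths(1,2)] ths(3) by metis
  obtain V Vi where V: "V \<in> carrier_mat ?n ?n" "Vi \<in> carrier_mat ?n ?n"
    "V * Vi = 1\<^sub>m ?n" "Vi * V = 1\<^sub>m ?n" and AV: "A * V = V * mat_diag ?n th"
    and E: "\<And>k. k \<le> d \<Longrightarrow> E k = V * diag_unit ?n k * Vi"
    using prim_idem_diagonalization[OF A assms(2,3)] assms(4) by metis
  note T = leonard_system_tridiagonal[OF assms(1) W(1,2,4) Es]
  note basis = change_of_basis[OF A mat_diag_dim V W AV]
  have U: "Wi * V \<in> carrier_mat ?n ?n" "Vi * W \<in> carrier_mat ?n ?n"
    using V W by simp_all
  have m: "ls_m E Es r = (Vi * W) $$ (r, 0) * (Wi * V) $$ (0, r)" if "r \<le> d" for r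
    unfolding ls_m_def using that E Es V W by (simp add: mtrace_diag_unit_products)
  show ?thesis
    using tridiagonal_orthogonality[OF T(1) U basis]
      tridiagonal_dual_orthogonality[OF T(1) U basis T(2)] m
    by simp
qed

end
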